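(* Let $P=b_0+b_1x_1+\dots+b_nx_n\in M_N(\mathbb{C}\langle x_1,\dots,x_n\rangle)$ with $b_0,\dots,b_n\in M_N(\mathbb{C})$. Then: (1) $\sigma^{\mathrm{full}}_{\mathbb{C}\langle x_1,\dots,x_n\rangle}(P)\subseteq\sigma(b_0)$, the set of eigenvalues of $b_0$; (2) if $b_1x_1+\dots+b_nx_n$ is full over $\mathbb{C}\langle x_1,\dots,x_n\rangle$, then $\sigma^{\mathrm{full}}_{\mathbb{C}\langle x_1,\dots,x_n\rangle}(P)=\emptyset$.
   Context: Inner rank: for $0\ne A\in M_{m,k}(\mathcal{B})$ over a unital algebra $\mathcal{B}$, $\rho(A)$ is the least $r$ with $A=CD$, $C\in M_{m,r}(\mathcal{B}),D\in M_{r,k}(\mathcal{B})$; $A$ is full if $\rho(A)=\min\{m,k\}$. For $A\in M_N(\mathcal{B})$, $\sigma^{\mathrm{full}}_{\mathcal{B}}(A)$ is the set of $\lambda\in\mathbb{C}$ such that $A-\lambda1_N$ is not full over $\mathcal{B}$. *)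

theory Defs
  imports Complex_Main "HOL-Library.Function_Algebras" "Jordan_Normal_Form.Char_Poly"
begin

text \<open>The free algebra C<x_0,...,x_{n-1}> of noncommutative polynomials in n variables.\<close>

type_synonym ncpoly = "nat list \<Rightarrow> complex"

definition nc_poly_set :: "nat \<Rightarrow> ncpoly set" where
  "nc_poly_set n = {f. finite {w. f w \<noteq> 0} \<and> (\<forall>w. f w \<noteq> 0 \<longrightarrow> set w \<subseteq> {..<n})}"

definition nc_mult :: "ncpoly \<Rightarrow> ncpoly \<Rightarrow> ncpoly" where
  "nc_mult f g = (\<lambda>w. \<Sum>i\<le>length w. f (take i w) * g (drop i w))"

definition nc_const :: "complex \<Rightarrow> ncpoly" where
  "nc_const c = (\<lambda>w. if w = [] then c else 0)"

definition nc_var :: "nat \<Rightarrow> ncpoly" where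
  "nc_var l = (\<lambda>w. if w = [l] then 1 else 0)"

definition nc_smult :: "complex \<Rightarrow> ncpoly \<Rightarrow> ncpoly" where
  "nc_smult c f = (\<lambda>w. c * f w)"

type_synonym ncmat = "nat \<Rightarrow> nat \<Rightarrow> ncpoly"

definition nc_mat_set :: "nat \<Rightarrow> nat \<Rightarrow> nat \<Rightarrow> ncmat set" where
  "nc_mat_set n m k = {A. \<forall>i<m. \<forall>j<k. A i j \<in> nc_poly_set n}"

definition nc_mat_mult :: "nat \<Rightarrow> ncmat \<Rightarrow> ncmat \<Rightarrow> ncmat" where
  "nc_mat_mult r C D = (\<lambda>i j. \<Sum>l<r. nc_mult (C i l) (D l j))"

definition nc_inner_rank :: "nat \<Rightarrow> nat \<Rightarrow> nat \<Rightarrow> ncmat \<Rightarrow> nat" where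
  "nc_inner_rank n m k A = (LEAST r. \<exists>C D. C \<in> nc_mat_set n m r \<and> D \<in> nc_mat_set n r k \<and>
       (\<forall>i<m. \<forall>j<k. A i j = nc_mat_mult r C D i j))"

definition nc_full :: "nat \<Rightarrow> nat \<Rightarrow> nat \<Rightarrow> ncmat \<Rightarrow> bool" where
  "nc_full n m k A \<longleftrightarrow> nc_inner_rank n m k A = min m k"

definition nc_full_spectrum :: "nat \<Rightarrow> nat \<Rightarrow> ncmat \<Rightarrow> complex set" where
  "nc_full_spectrum n N A =
     {z. \<not> nc_full n N N (\<lambda>i j. A i j - (if i = j then nc_const z else 0))}"

definition nc_pencil :: "nat \<Rightarrow> complex mat \<Rightarrow> (nat \<Rightarrow> complex mat) \<Rightarrow> ncmat" where
  "nc_pencil n b0 b = (\<lambda>i j. nc_const (b0 $$ (i, j)) + (\<Sum>l<n. nc_smult (b l $$ (i, j)) (nc_var l)))"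

definition nc_hom_part :: "nat \<Rightarrow> (nat \<Rightarrow> complex mat) \<Rightarrow> ncmat" where
  "nc_hom_part n b = (\<lambda>i j. \<Sum>l<n. nc_smult (b l $$ (i, j)) (nc_var l))"

end

theory Submission
  imports Defs
begin

text \<open>
  Part (1): if \<open>P - \<lambda>\<close> factors through \<open>r < N\<close> over the free algebra, then evaluating at the
  empty word (all variables set to 0) factors \<open>b\<^sub>0 - \<lambda>\<close> through \<open>r\<close>, so \<open>det (b\<^sub>0 - \<lambda>) = 0\<close>.

  Part (2) rests on Cohn's degree reduction: a factorization \<open>A = C D\<close> through \<open>r\<close> of a matrix
  of degree \<open>\<le> 1\<close> can be modified by elementary operations on the inner index (subtract a left
  combination of other columns of \<open>C\<close> from one column, compensate in the rows of \<open>D\<close>) until for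
  every inner index the column of \<open>C\<close> or the row of \<open>D\<close> is constant. Then dropping the constant
  terms of the non-constant factors factors the linear part of \<open>A\<close> through the same \<open>r\<close>. So if
  \<open>P - \<lambda>\<close> is not full, neither is \<open>b\<^sub>1x\<^sub>1 + \<dots> + b\<^sub>nx\<^sub>n\<close>.
\<close>

section \<open>The free algebra\<close>

lemma sum_fun_apply: "(\<Sum>k\<in>A. (f k :: 'a \<Rightarrow> 'b::comm_monoid_add)) x = (\<Sum>k\<in>A. f k x)"
  by (induction A rule: infinite_finite_induct) auto

lemma nc_mult_assoc: "nc_mult (nc_mult f g) h = nc_mult f (nc_mult g h)"
proof
  fix w :: "nat list"
  let ?L = "length w"
  let ?G = "\<lambda>i j. f (take i w) * g (take j (drop i w)) * h (drop (i + j) w)"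
  have "nc_mult (nc_mult f g) h w = (\<Sum>k\<le>?L. \<Sum>i\<le>k. ?G i (k - i))"
    unfolding nc_mult_def sum_distrib_right
    by (intro sum.cong refl) (auto simp: take_drop min_def)
  also have "\<dots> = (\<Sum>(i, j)\<in>{(i, j). i + j \<le> ?L}. ?G i j)"
    by (rule sum.triangle_reindex_eq[symmetric])
  also have "\<dots> = (\<Sum>i\<le>?L. \<Sum>j\<le>?L - i. ?G i j)"
  proof -
    have "{(i, j). i + j \<le> ?L} = Sigma {..?L} (\<lambda>i. {..?L - i})"
      by auto
    then show ?thesis
      by (simp add: sum.Sigma)
  qed
  also have "\<dots> = nc_mult f (nc_mult g h) w"
    unfolding nc_mult_def sum_distrib_left
    by (intro sum.cong refl) (simp_all add: mult.assoc add.commute)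
  finally show "nc_mult (nc_mult f g) h w = nc_mult f (nc_mult g h) w" .
qed

lemma nc_mult_add_left: "nc_mult (f + g) h = nc_mult f h + nc_mult g h"
  by (simp add: nc_mult_def fun_eq_iff algebra_simps sum.distrib)

lemma nc_mult_add_right: "nc_mult h (f + g) = nc_mult h f + nc_mult h g"
  by (simp add: nc_mult_def fun_eq_iff algebra_simps sum.distrib)

lemma nc_mult_diff_left: "nc_mult (f - g) h = nc_mult f h - nc_mult g h"
  by (simp add: nc_mult_def fun_eq_iff algebra_simps sum_subtractf)

lemma nc_mult_zero_left: "nc_mult 0 h = 0"
  by (simp add: nc_mult_def fun_eq_iff)

lemma nc_mult_zero_right: "nc_mult h 0 = 0"
  by (simp add: nc_mult_def fun_eq_iff)

lemma nc_mult_sum_left: "nc_mult (\<Sum>k\<in>A. f k) h = (\<Sum>k\<in>A. nc_mult (f k) h)"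
  by (induction A rule: infinite_finite_induct)
    (simp_all only: sum.infinite sum.empty sum.insert not_False_eq_True nc_mult_add_left nc_mult_zero_left)

lemma nc_mult_Nil: "nc_mult f g [] = f [] * g []"
  by (simp add: nc_mult_def)

lemma nc_mult_const_left: "nc_mult (nc_const c) g = (\<lambda>w. c * g w)"
  unfolding nc_mult_def nc_const_def by (simp add: fun_eq_iff sum.atMost_shift)

lemma nc_mult_const_right: "nc_mult g (nc_const c) = (\<lambda>w. g w * c)"
  unfolding nc_mult_def nc_const_def
  by (simp add: fun_eq_iff atMost_Suc_eq_insert_0 flip: lessThan_Suc_atMost)

lemma nc_poly_setI:
  "finite {w. f w \<noteq> 0} \<Longrightarrow> (\<And>w. f w \<noteq> 0 \<Longrightarrow> set w \<subseteq> {..<n}) \<Longrightarrow> f \<in> nc_poly_set n"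
  by (auto simp: nc_poly_set_def)

lemma nc_poly_set_finite_support: "f \<in> nc_poly_set n \<Longrightarrow> finite {w. f w \<noteq> 0}"
  by (auto simp: nc_poly_set_def)

lemma nc_poly_set_letters: "f \<in> nc_poly_set n \<Longrightarrow> f w \<noteq> 0 \<Longrightarrow> set w \<subseteq> {..<n}"
  by (auto simp: nc_poly_set_def)

lemma nc_poly_set_zero: "0 \<in> nc_poly_set n"
  by (simp add: nc_poly_set_def)

lemma nc_poly_set_add:
  assumes "f \<in> nc_poly_set n" "g \<in> nc_poly_set n"
  shows "f + g \<in> nc_poly_set n"
proof (rule nc_poly_setI)
  have "{w. (f + g) w \<noteq> 0} \<subseteq> {w. f w \<noteq> 0} \<union> {w. g w \<noteq> 0}"
    by auto
  then show "finite {w. (f + g) w \<noteq> 0}"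
    using assms nc_poly_set_finite_support finite_subset by blast
next
  fix w assume "(f + g) w \<noteq> 0"
  then have "f w \<noteq> 0 \<or> g w \<noteq> 0"
    by auto
  then show "set w \<subseteq> {..<n}"
    using assms nc_poly_set_letters by blast
qed

lemma nc_poly_set_uminus: "f \<in> nc_poly_set n \<Longrightarrow> - f \<in> nc_poly_set n"
  by (simp add: nc_poly_set_def)

lemma nc_poly_set_diff: "f \<in> nc_poly_set n \<Longrightarrow> g \<in> nc_poly_set n \<Longrightarrow> f - g \<in> nc_poly_set n"
  using nc_poly_set_add[of f n "- g"] nc_poly_set_uminus by simp

lemma nc_poly_set_sum: "(\<And>k. k \<in> A \<Longrightarrow> f k \<in> nc_poly_set n) \<Longrightarrow> (\<Sum>k\<in>A. f k) \<in> nc_poly_set n"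
  by (induction A rule: infinite_finite_induct) (auto intro: nc_poly_set_add nc_poly_set_zero)

lemma nc_mult_nonzero_split:
  assumes "nc_mult f g w \<noteq> 0"
  obtains i where "f (take i w) \<noteq> 0" "g (drop i w) \<noteq> 0"
  using assms unfolding nc_mult_def by (metis (no_types, lifting) mult_eq_0_iff sum.neutral)

lemma nc_poly_set_mult:
  assumes f: "f \<in> nc_poly_set n" and g: "g \<in> nc_poly_set n"
  shows "nc_mult f g \<in> nc_poly_set n"
proof (rule nc_poly_setI)
  have "{w. nc_mult f g w \<noteq> 0} \<subseteq> (\<lambda>(u, v). u @ v) ` ({w. f w \<noteq> 0} \<times> {w. g w \<noteq> 0})"
  proof
    fix w assume "w \<in> {w. nc_mult f g w \<noteq> 0}"
    then obtain i where "f (take i w) \<noteq> 0" "g (drop i w) \<noteq> 0"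
      by (auto elim: nc_mult_nonzero_split)
    then show "w \<in> (\<lambda>(u, v). u @ v) ` ({w. f w \<noteq> 0} \<times> {w. g w \<noteq> 0})"
      by (auto intro!: image_eqI[of _ _ "(take i w, drop i w)"])
  qed
  then show "finite {w. nc_mult f g w \<noteq> 0}"
    by (rule finite_subset) (use f g nc_poly_set_finite_support in auto)
next
  fix w assume "nc_mult f g w \<noteq> 0"
  then obtain i where "f (take i w) \<noteq> 0" "g (drop i w) \<noteq> 0"
    by (auto elim: nc_mult_nonzero_split)
  then have "set (take i w) \<union> set (drop i w) \<subseteq> {..<n}"
    using f g nc_poly_set_letters by blast
  then show "set w \<subseteq> {..<n}"
    by (metis append_take_drop_id set_append)
qed

lemma nc_poly_set_const: "nc_const c \<in> nc_poly_set n"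
  unfolding nc_poly_set_def nc_const_def by (auto intro: finite_subset[of _ "{[]}"])

lemma nc_poly_set_var: "l < n \<Longrightarrow> nc_var l \<in> nc_poly_set n"
  unfolding nc_poly_set_def nc_var_def by (auto intro: finite_subset[of _ "{[l]}"])

lemma nc_poly_set_smult: "f \<in> nc_poly_set n \<Longrightarrow> nc_smult c f \<in> nc_poly_set n"
  by (rule nc_poly_setI)
    (auto simp: nc_smult_def intro: finite_subset[OF _ nc_poly_set_finite_support] dest: nc_poly_set_letters)

lemma nc_poly_set_restrict:
  assumes "f \<in> nc_poly_set n"
  shows "(\<lambda>v. if Q v then f v else 0) \<in> nc_poly_set n"
proof (rule nc_poly_setI)
  show "finite {v. (if Q v then f v else 0) \<noteq> 0}"
    by (rule finite_subset[OF _ nc_poly_set_finite_support[OF assms]]) auto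
  show "set v \<subseteq> {..<n}" if "(if Q v then f v else 0) \<noteq> 0" for v
    using that nc_poly_set_letters[OF assms] by (auto split: if_splits)
qed

lemma nc_poly_set_right_quotient:
  assumes "f \<in> nc_poly_set n"
  shows "(\<lambda>v. f (v @ u)) \<in> nc_poly_set n"
proof (rule nc_poly_setI)
  have "finite ((\<lambda>v. v @ u) -` {w. f w \<noteq> 0})"
    by (rule finite_vimageI[OF nc_poly_set_finite_support[OF assms]]) (simp add: inj_def)
  then show "finite {v. f (v @ u) \<noteq> 0}"
    by (simp add: vimage_def)
next
  fix v assume "f (v @ u) \<noteq> 0"
  then show "set v \<subseteq> {..<n}"
    using nc_poly_set_letters[OF assms] by fastforce
qed

section \<open>Degrees and top coefficients\<close>

definition nc_deg_le :: "ncpoly \<Rightarrow> nat \<Rightarrow> bool" where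
  "nc_deg_le f p \<longleftrightarrow> (\<forall>w. f w \<noteq> 0 \<longrightarrow> length w \<le> p)"

lemma nc_deg_le_coeff_eq_0: "nc_deg_le f p \<Longrightarrow> p < length w \<Longrightarrow> f w = 0"
  by (auto simp: nc_deg_le_def)

lemma nc_mult_eq_0_above_deg:
  assumes "nc_deg_le f p" "nc_deg_le g q" "p + q < length w"
  shows "nc_mult f g w = 0"
  unfolding nc_mult_def
proof (rule sum.neutral, rule ballI)
  fix i assume "i \<in> {..length w}"
  then have "p < length (take i w) \<or> q < length (drop i w)"
    using assms(3) by auto
  then show "f (take i w) * g (drop i w) = 0"
    using nc_deg_le_coeff_eq_0[OF assms(1)] nc_deg_le_coeff_eq_0[OF assms(2)] by auto
qed

lemma nc_mult_top_coeff:
  assumes "nc_deg_le f p" "nc_deg_le g q" "length w = p + q"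
  shows "nc_mult f g w = f (take p w) * g (drop p w)"
proof -
  have "f (take i w) * g (drop i w) = 0" if "i \<le> length w" "i \<noteq> p" for i
  proof -
    have "p < length (take i w) \<or> q < length (drop i w)"
      using that assms(3) by auto
    then show ?thesis
      using nc_deg_le_coeff_eq_0[OF assms(1)] nc_deg_le_coeff_eq_0[OF assms(2)] by auto
  qed
  then have "nc_mult f g w = (\<Sum>i\<in>{p}. f (take i w) * g (drop i w))"
    unfolding nc_mult_def using assms(3) by (intro sum.mono_neutral_right) auto
  then show ?thesis
    by simp
qed

lemma nc_deg_le_0_eq_const: "nc_deg_le f 0 \<Longrightarrow> f = nc_const (f [])"
  by (auto simp: nc_deg_le_def nc_const_def fun_eq_iff)

definition nc_drop_const :: "ncpoly \<Rightarrow> ncpoly" where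
  "nc_drop_const f = (\<lambda>w. if w = [] then 0 else f w)"

lemma nc_poly_set_drop_const: "f \<in> nc_poly_set n \<Longrightarrow> nc_drop_const f \<in> nc_poly_set n"
  by (rule nc_poly_setI)
    (auto simp: nc_drop_const_def intro: finite_subset[OF _ nc_poly_set_finite_support]
      dest: nc_poly_set_letters split: if_splits)

lemma nc_drop_const_sum: "nc_drop_const (\<Sum>k\<in>A. f k) = (\<Sum>k\<in>A. nc_drop_const (f k))"
  by (simp add: nc_drop_const_def sum_fun_apply fun_eq_iff)

lemma nc_drop_const_mult_const_left:
  "nc_drop_const (nc_mult (nc_const c) g) = nc_mult (nc_const c) (nc_drop_const g)"
  by (simp add: nc_drop_const_def nc_mult_const_left fun_eq_iff)

lemma nc_drop_const_mult_const_right: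
  "nc_drop_const (nc_mult g (nc_const c)) = nc_mult (nc_drop_const g) (nc_const c)"
  by (simp add: nc_drop_const_def nc_mult_const_right fun_eq_iff)

lemma nc_mat_mult_Nil: "nc_mat_mult r C D i j [] = (\<Sum>k<r. C i k [] * D k j [])"
  by (simp add: nc_mat_mult_def sum_fun_apply nc_mult_Nil)

lemma nc_mat_mult_top_coeff:
  assumes "P \<subseteq> {..<r}"
    and "\<And>k. k \<in> P \<Longrightarrow> nc_deg_le (C i k) (g k)"
    and "\<And>k. k \<in> P \<Longrightarrow> nc_deg_le (D k x) (d k)"
    and "\<And>k. k \<in> P \<Longrightarrow> g k + d k \<le> length v"
    and "\<And>k. k < r \<Longrightarrow> k \<notin> P \<Longrightarrow> nc_mult (C i k) (D k x) = 0"
  shows "nc_mat_mult r C D i x v =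
    (\<Sum>k | k \<in> P \<and> g k + d k = length v. C i k (take (g k) v) * D k x (drop (g k) v))"
proof -
  have "nc_mat_mult r C D i x v = (\<Sum>k\<in>P. nc_mult (C i k) (D k x) v)"
    unfolding nc_mat_mult_def sum_fun_apply
    using assms(1,5) by (intro sum.mono_neutral_right) auto
  also have "\<dots> = (\<Sum>k\<in>P. if g k + d k = length v then C i k (take (g k) v) * D k x (drop (g k) v) else 0)"
  proof (rule sum.cong[OF refl])
    fix k assume k: "k \<in> P"
    show "nc_mult (C i k) (D k x) v =
      (if g k + d k = length v then C i k (take (g k) v) * D k x (drop (g k) v) else 0)"
    proof (cases "g k + d k = length v")
      case True
      then show ?thesis
        using nc_mult_top_coeff[OF assms(2,3)[OF k]] by simp
    next
      case False
      then have "g k + d k < length v"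
        using assms(4)[OF k] by simp
      then show ?thesis
        using nc_mult_eq_0_above_deg[OF assms(2,3)[OF k]] by simp
    qed
  qed
  also have "\<dots> = (\<Sum>k | k \<in> P \<and> g k + d k = length v. C i k (take (g k) v) * D k x (drop (g k) v))"
    using finite_subset[OF assms(1)] by (simp add: sum.inter_filter)
  finally show ?thesis .
qed

lemma nc_mat_mult_top_coeff_append:
  assumes "P \<subseteq> {..<r}"
    and "\<And>k. k \<in> P \<Longrightarrow> nc_deg_le (C i k) (g k)"
    and "\<And>k. k \<in> P \<Longrightarrow> nc_deg_le (D k x) (d k)"
    and "\<And>k. k \<in> P \<Longrightarrow> g k + d k \<le> length w + length u"
    and "\<And>k. k \<in> P \<Longrightarrow> g k + d k = length w + length u \<Longrightarrow> g k \<le> length w"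
    and "\<And>k. k < r \<Longrightarrow> k \<notin> P \<Longrightarrow> nc_mult (C i k) (D k x) = 0"
  shows "nc_mat_mult r C D i x (w @ u) = (\<Sum>k | k \<in> P \<and> g k + d k = length w + length u.
    C i k (take (g k) w) * D k x (drop (g k) w @ u))"
proof -
  have "nc_mat_mult r C D i x (w @ u) = (\<Sum>k | k \<in> P \<and> g k + d k = length (w @ u).
      C i k (take (g k) (w @ u)) * D k x (drop (g k) (w @ u)))"
    by (rule nc_mat_mult_top_coeff) (use assms in auto)
  also have "\<dots> = (\<Sum>k | k \<in> P \<and> g k + d k = length w + length u.
      C i k (take (g k) w) * D k x (drop (g k) w @ u))"
    using assms(5) by (intro sum.cong) auto
  finally show ?thesis .
qed

lemma nc_mat_mult_column_op:
  assumes "j < r" "e j = 0"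
  shows "nc_mat_mult r
      (\<lambda>i l. if l = j then C i j - (\<Sum>k<r. nc_mult (C i k) (e k)) else C i l)
      (\<lambda>l x. D l x + nc_mult (e l) (D j x)) i x
    = nc_mat_mult r C D i x"
proof -
  define S where "S i = (\<Sum>k<r. nc_mult (C i k) (e k))" for i
  have entry: "nc_mult (if l = j then C i j - S i else C i l) (D l x + nc_mult (e l) (D j x)) =
      nc_mult (C i l) (D l x) + nc_mult (nc_mult (C i l) (e l)) (D j x)
      - (if l = j then nc_mult (S i) (D j x) else 0)" for l
    using assms(2) by (cases "l = j")
      (simp_all add: nc_mult_add_right nc_mult_diff_left nc_mult_assoc nc_mult_zero_left nc_mult_zero_right)
  have "nc_mat_mult r (\<lambda>i l. if l = j then C i j - S i else C i l)
      (\<lambda>l x. D l x + nc_mult (e l) (D j x)) i x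
    = nc_mat_mult r C D i x + (\<Sum>l<r. nc_mult (nc_mult (C i l) (e l)) (D j x)) - nc_mult (S i) (D j x)"
    unfolding nc_mat_mult_def entry using assms(1) by (simp add: sum.distrib sum_subtractf)
  also have "(\<Sum>l<r. nc_mult (nc_mult (C i l) (e l)) (D j x)) = nc_mult (S i) (D j x)"
    by (simp add: S_def nc_mult_sum_left)
  finally show ?thesis
    unfolding S_def by (simp only: add_diff_cancel)
qed

lemma finite_has_lex_max:
  fixes s :: "'a \<Rightarrow> 'b :: linorder" and g :: "'a \<Rightarrow> 'c :: linorder"
  assumes "finite P" "P \<noteq> {}"
  obtains j where "j \<in> P" "\<And>k. k \<in> P \<Longrightarrow> s k \<le> s j"
    "\<And>k. k \<in> P \<Longrightarrow> s k = s j \<Longrightarrow> g k \<le> g j"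
proof -
  define T where "T = {k \<in> P. s k = Max (s ` P)}"
  have "Max (s ` P) \<in> s ` P"
    using assms by simp
  then have fin_T: "finite T" and "T \<noteq> {}"
    using assms(1) by (auto simp: T_def)
  then have "Max (g ` T) \<in> g ` T"
    by simp
  then obtain j where j: "j \<in> T" "g j = Max (g ` T)"
    by auto
  show ?thesis
  proof (rule that)
    show "j \<in> P"
      using j by (simp add: T_def)
    show "s k \<le> s j" if "k \<in> P" for k
      using j that assms(1) by (simp add: T_def)
    show "g k \<le> g j" if "k \<in> P" "s k = s j" for k
      using j that fin_T by (auto simp: T_def)
  qed
qed

definition strict_length_bound :: "nat list set \<Rightarrow> nat" where
  "strict_length_bound S = (LEAST b. \<forall>w\<in>S. length w < b)"

lemma strict_length_bound_le_iff:
  assumes "finite S"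
  shows "strict_length_bound S \<le> b \<longleftrightarrow> (\<forall>w\<in>S. length w < b)"
proof -
  obtain b0 where "length ` S \<subseteq> {..<b0}"
    using finite_nat_bounded assms by blast
  then have "\<exists>b. \<forall>w\<in>S. length w < b"
    by auto
  then have "\<forall>w\<in>S. length w < strict_length_bound S"
    unfolding strict_length_bound_def by (rule LeastI_ex)
  then show ?thesis
    unfolding strict_length_bound_def by (auto intro: Least_le order.strict_trans2)
qed

lemma strict_length_bound_attained:
  assumes "finite S" "S \<noteq> {}"
  obtains w where "w \<in> S" "Suc (length w) = strict_length_bound S"
proof -
  have "\<not> strict_length_bound S \<le> strict_length_bound S - 1"
    using assms strict_length_bound_le_iff[OF assms(1)] by fastforce
  then obtain w where "w \<in> S" "strict_length_bound S - 1 \<le> length w"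
    using strict_length_bound_le_iff[OF assms(1)] by (auto simp: not_less)
  moreover have "length w < strict_length_bound S"
    using \<open>w \<in> S\<close> strict_length_bound_le_iff[OF assms(1)] by blast
  ultimately show ?thesis
    using that by simp
qed

section \<open>Degree reduction of factorizations\<close>

definition nc_col_size :: "nat \<Rightarrow> ncmat \<Rightarrow> nat \<Rightarrow> nat" where
  "nc_col_size N C k = strict_length_bound {w. \<exists>i<N. C i k w \<noteq> 0}"

definition nc_row_size :: "nat \<Rightarrow> ncmat \<Rightarrow> nat \<Rightarrow> nat" where
  "nc_row_size N D k = nc_col_size N (\<lambda>x k. D k x) k"

definition nc_col_measure :: "nat \<Rightarrow> nat \<Rightarrow> ncmat \<Rightarrow> nat" where
  "nc_col_measure N r C = (\<Sum>k<r. nc_col_size N C k)"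

lemma nc_mat_set_transpose: "D \<in> nc_mat_set n r N \<Longrightarrow> (\<lambda>x k. D k x) \<in> nc_mat_set n N r"
  by (simp add: nc_mat_set_def)

lemma nc_col_supp_finite:
  assumes "C \<in> nc_mat_set n N r" "k < r"
  shows "finite {w. \<exists>i<N. C i k w \<noteq> 0}"
proof -
  have "{w. \<exists>i<N. C i k w \<noteq> 0} = (\<Union>i<N. {w. C i k w \<noteq> 0})"
    by auto
  then show ?thesis
    using assms by (auto simp: nc_mat_set_def intro!: nc_poly_set_finite_support[of _ n])
qed

lemma nc_col_size_le_iff:
  assumes "C \<in> nc_mat_set n N r" "k < r"
  shows "nc_col_size N C k \<le> b \<longleftrightarrow> (\<forall>i<N. \<forall>w. C i k w \<noteq> 0 \<longrightarrow> length w < b)"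
  unfolding nc_col_size_def strict_length_bound_le_iff[OF nc_col_supp_finite[OF assms]] by blast

lemma nc_deg_le_col_size:
  assumes "C \<in> nc_mat_set n N r" "k < r" "i < N"
  shows "nc_deg_le (C i k) (nc_col_size N C k - 1)"
proof -
  have "\<forall>w. C i k w \<noteq> 0 \<longrightarrow> length w < nc_col_size N C k"
    using nc_col_size_le_iff[OF assms(1,2), of "nc_col_size N C k"] assms(3) by blast
  then show ?thesis
    by (auto simp: nc_deg_le_def)
qed

lemma nc_deg_le_row_size:
  "D \<in> nc_mat_set n r N \<Longrightarrow> k < r \<Longrightarrow> x < N \<Longrightarrow> nc_deg_le (D k x) (nc_row_size N D k - 1)"
  using nc_deg_le_col_size[OF nc_mat_set_transpose] by (simp add: nc_row_size_def)

lemma nc_col_size_0: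
  "C \<in> nc_mat_set n N r \<Longrightarrow> k < r \<Longrightarrow> i < N \<Longrightarrow> nc_col_size N C k = 0 \<Longrightarrow> C i k = 0"
  using nc_col_size_le_iff[of C n N r k 0] by auto

lemma nc_row_size_0:
  "D \<in> nc_mat_set n r N \<Longrightarrow> k < r \<Longrightarrow> x < N \<Longrightarrow> nc_row_size N D k = 0 \<Longrightarrow> D k x = 0"
  using nc_col_size_0[OF nc_mat_set_transpose] by (simp add: nc_row_size_def)

lemma nc_row_size_attained:
  assumes D: "D \<in> nc_mat_set n r N" and k: "k < r" and "nc_row_size N D k \<noteq> 0"
  obtains x w where "x < N" "D k x w \<noteq> 0" "Suc (length w) = nc_row_size N D k"
proof -
  note D' = nc_mat_set_transpose[OF D]
  have "{w. \<exists>x<N. D k x w \<noteq> 0} \<noteq> {}"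
    using nc_col_size_le_iff[OF D' k, of 0] assms(3) by (auto simp: nc_row_size_def)
  then obtain w where "w \<in> {w. \<exists>x<N. D k x w \<noteq> 0}" "Suc (length w) = nc_row_size N D k"
    using strict_length_bound_attained[OF nc_col_supp_finite[OF D' k]]
    unfolding nc_row_size_def nc_col_size_def by blast
  then show ?thesis
    using that by blast
qed

lemma nc_col_measure_less:
  assumes "j < r" "\<And>i l. i < N \<Longrightarrow> l \<noteq> j \<Longrightarrow> C' i l = C i l"
    and "nc_col_size N C' j < nc_col_size N C j"
  shows "nc_col_measure N r C' < nc_col_measure N r C"
  unfolding nc_col_measure_def
proof (rule sum_strict_mono_ex1)
  have "nc_col_size N C' l = nc_col_size N C l" if "l \<noteq> j" for l
  proof -
    have "{w. \<exists>i<N. C' i l w \<noteq> 0} = {w. \<exists>i<N. C i l w \<noteq> 0}"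
      using assms(2) that by auto
    then show ?thesis
      by (simp add: nc_col_size_def)
  qed
  then have "nc_col_size N C' l \<le> nc_col_size N C l" for l
    using assms(3) by (cases "l = j") auto
  then show "\<forall>l\<in>{..<r}. nc_col_size N C' l \<le> nc_col_size N C l"
    by blast
  show "\<exists>l\<in>{..<r}. nc_col_size N C' l < nc_col_size N C l"
    using assms(1,3) by blast
qed simp

lemma nc_drop_const_factor_of_const_cols:
  assumes C: "C \<in> nc_mat_set n N r" and D: "D \<in> nc_mat_set n r N"
    and const: "\<And>k. k < r \<Longrightarrow> nc_col_size N C k \<le> 1 \<or> nc_row_size N D k \<le> 1"
  shows "\<exists>U V. U \<in> nc_mat_set n N r \<and> V \<in> nc_mat_set n r N \<and>
    (\<forall>i<N. \<forall>x<N. nc_drop_const (nc_mat_mult r C D i x) = nc_mat_mult r U V i x)"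
proof -
  define U where "U i k = (if nc_col_size N C k \<le> 1 then C i k else nc_drop_const (C i k))" for i k
  define V where "V k x = (if nc_col_size N C k \<le> 1 then nc_drop_const (D k x) else D k x)" for k x
  have "U \<in> nc_mat_set n N r" "V \<in> nc_mat_set n r N"
    using C D nc_poly_set_drop_const by (auto simp: U_def V_def nc_mat_set_def)
  moreover have "nc_drop_const (nc_mult (C i k) (D k x)) = nc_mult (U i k) (V k x)"
    if i: "i < N" and k: "k < r" and x: "x < N" for i k x
  proof (cases "nc_col_size N C k \<le> 1")
    case True
    then obtain c where "C i k = nc_const c"
      using nc_deg_le_col_size[OF C k i] nc_deg_le_0_eq_const by fastforce
    with True show ?thesis
      by (simp add: U_def V_def nc_drop_const_mult_const_left)
  next
    case False
    then obtain c where "D k x = nc_const c"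
      using const[OF k] nc_deg_le_row_size[OF D k x] nc_deg_le_0_eq_const by fastforce
    with False show ?thesis
      by (simp add: U_def V_def nc_drop_const_mult_const_right)
  qed
  then have "\<forall>i<N. \<forall>x<N. nc_drop_const (nc_mat_mult r C D i x) = nc_mat_mult r U V i x"
    by (simp add: nc_mat_mult_def nc_drop_const_sum)
  ultimately show ?thesis
    by blast
qed

lemma nc_leading_column_cancel:
  fixes C :: ncmat and r :: nat
  assumes T: "T \<subseteq> {..<r}" "j \<in> T"
    and g_max: "\<And>k. k \<in> T \<Longrightarrow> g k \<le> g j"
    and deg: "\<And>k. k \<in> T \<Longrightarrow> nc_deg_le (C i k) (g k)"
    and rel: "\<And>w. length w = g j \<Longrightarrow> (\<Sum>k\<in>T. C i k (take (g k) w) * a k (drop (g k) w)) = 0"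
    and a_j: "a j [] \<noteq> 0"
    and e: "e = (\<lambda>k. if k \<in> T - {j}
      then (\<lambda>v. if length v + g k = g j then nc_smult (- 1 / a j []) (a k) v else 0) else 0)"
    and w: "g j \<le> length w"
  shows "C i j w = (\<Sum>k<r. nc_mult (C i k) (e k)) w"
proof -
  have "(\<Sum>k<r. nc_mult (C i k) (e k)) w = nc_mat_mult r C (\<lambda>k _. e k) i 0 w"
    by (simp add: nc_mat_mult_def)
  also have "\<dots> = (\<Sum>k | k \<in> T - {j} \<and> g k + (g j - g k) = length w.
      C i k (take (g k) w) * e k (drop (g k) w))"
    by (rule nc_mat_mult_top_coeff)
      (use T deg g_max w in \<open>auto simp: e nc_deg_le_def nc_mult_zero_right\<close>)
  also have "\<dots> = C i j w"
  proof (cases "length w = g j")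
    case True
    let ?S = "\<Sum>k\<in>T - {j}. C i k (take (g k) w) * a k (drop (g k) w)"
    have "(\<Sum>k\<in>T. C i k (take (g k) w) * a k (drop (g k) w)) = C i j w * a j [] + ?S"
      using True by (simp add: sum.remove[OF finite_subset[OF T(1) finite_lessThan] T(2)])
    then have S: "- ?S = C i j w * a j []"
      using rel[OF True] by (metis add.commute neg_eq_iff_add_eq_0)
    have "(\<Sum>k\<in>T - {j}. C i k (take (g k) w) * e k (drop (g k) w)) = - ?S / a j []"
      using True g_max by (simp add: e nc_smult_def sum_divide_distrib sum_negf)
    also have "\<dots> = C i j w"
      unfolding S using a_j by simp
    moreover have "{k. k \<in> T - {j} \<and> g k + (g j - g k) = length w} = T - {j}"
      using True g_max by auto
    ultimately show ?thesis
      by (simp only:)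
  next
    case False
    then have "C i j w = 0"
      using w deg[OF T(2)] nc_deg_le_coeff_eq_0 by simp
    moreover have "{k. k \<in> T - {j} \<and> g k + (g j - g k) = length w} = {}"
      using False g_max by auto
    ultimately show ?thesis
      by (simp only: sum.empty)
  qed
  finally show ?thesis ..
qed

lemma nc_column_op_reduces_measure:
  assumes C: "C \<in> nc_mat_set n N r" and D: "D \<in> nc_mat_set n r N" and j: "j < r"
    and e: "e j = 0" "\<And>k. e k \<in> nc_poly_set n"
    and cancel: "\<And>i w. i < N \<Longrightarrow> b \<le> length w \<Longrightarrow> C i j w = (\<Sum>k<r. nc_mult (C i k) (e k)) w"
    and b: "b < nc_col_size N C j"
  obtains C' D' where "C' \<in> nc_mat_set n N r" "D' \<in> nc_mat_set n r N"
    "\<And>i x. i < N \<Longrightarrow> x < N \<Longrightarrow> nc_mat_mult r C' D' i x = nc_mat_mult r C D i x"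
    "nc_col_measure N r C' < nc_col_measure N r C"
proof -
  define C' where "C' = (\<lambda>i l. if l = j then C i j - (\<Sum>k<r. nc_mult (C i k) (e k)) else C i l)"
  define D' where "D' = (\<lambda>l x. D l x + nc_mult (e l) (D j x))"
  have C': "C' \<in> nc_mat_set n N r"
    using C e(2) j by (auto simp: C'_def nc_mat_set_def
        intro!: nc_poly_set_diff nc_poly_set_sum nc_poly_set_mult)
  show ?thesis
  proof (rule that[OF C'])
    show "D' \<in> nc_mat_set n r N"
      using D e(2) j by (auto simp: D'_def nc_mat_set_def intro!: nc_poly_set_add nc_poly_set_mult)
    show "nc_mat_mult r C' D' i x = nc_mat_mult r C D i x" for i x
      unfolding C'_def D'_def by (rule nc_mat_mult_column_op[where e = e, OF j e(1)])
    have "nc_col_size N C' j \<le> b"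
      unfolding nc_col_size_le_iff[OF C' j] using cancel by (auto simp: C'_def) (meson not_less)
    with b have "nc_col_size N C' j < nc_col_size N C j"
      by simp
    then show "nc_col_measure N r C' < nc_col_measure N r C"
      by (rule nc_col_measure_less[OF j, rotated]) (simp add: C'_def)
  qed
qed

text \<open>
  Among the inner indices \<open>k\<close> at which both the column of \<open>C\<close> and the
  row of \<open>D\<close> are nonzero, pick \<open>j\<close> maximising first \<open>m = deg C\<^sub>k + deg D\<^sub>k\<close>, then
  \<open>deg C\<^sub>k\<close>. Since \<open>C D\<close> has degree \<open>1 < m\<close>, the degree-\<open>m\<close> parts of the products
  \<open>C\<^sub>k D\<^sub>k\<close> cancel. Reading this off at the words \<open>w @ u\<close>, for a word \<open>u\<close> of top degree in
  row \<open>j\<close> of \<open>D\<close>, exhibits the top part of column \<open>j\<close> as a left combination of the other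
  columns; subtracting it, and compensating in the rows of \<open>D\<close>, lowers the degree of column \<open>j\<close>.
\<close>

lemma nc_col_measure_reduction:
  assumes C: "C \<in> nc_mat_set n N r" and D: "D \<in> nc_mat_set n r N"
    and lin: "\<And>i x. i < N \<Longrightarrow> x < N \<Longrightarrow> nc_deg_le (nc_mat_mult r C D i x) 1"
    and k0: "k0 < r" "2 \<le> nc_col_size N C k0" "2 \<le> nc_row_size N D k0"
  obtains C' D' where "C' \<in> nc_mat_set n N r" "D' \<in> nc_mat_set n r N"
    "\<And>i x. i < N \<Longrightarrow> x < N \<Longrightarrow> nc_mat_mult r C' D' i x = nc_mat_mult r C D i x"
    "nc_col_measure N r C' < nc_col_measure N r C"
proof -
  define g where "g k = nc_col_size N C k - 1" for k
  define d where "d k = nc_row_size N D k - 1" for k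
  define P where "P = {k. k < r \<and> nc_col_size N C k \<noteq> 0 \<and> nc_row_size N D k \<noteq> 0}"
  have P_r: "P \<subseteq> {..<r}" and k0_P: "k0 \<in> P"
    using k0 by (auto simp: P_def)
  obtain j where "j \<in> P" and s_max: "\<And>k. k \<in> P \<Longrightarrow> g k + d k \<le> g j + d j"
    and g_max: "\<And>k. k \<in> P \<Longrightarrow> g k + d k = g j + d j \<Longrightarrow> g k \<le> g j"
    using finite_has_lex_max[of P "\<lambda>k. g k + d k" g] finite_subset[OF P_r] k0_P by blast
  then have j: "j < r" "nc_col_size N C j \<noteq> 0" "nc_row_size N D j \<noteq> 0"
    by (auto simp: P_def)
  define T where "T = {k \<in> P. g k + d k = g j + d j}"
  obtain jj u where jj: "jj < N" and "D j jj u \<noteq> 0" "Suc (length u) = nc_row_size N D j"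
    using nc_row_size_attained[OF D j(1,3)] .
  then have u: "D j jj u \<noteq> 0" "length u = d j"
    by (simp_all add: d_def)
  have top_rel: "(\<Sum>k\<in>T. C i k (take (g k) w) * D k jj (drop (g k) w @ u)) = 0"
    if i: "i < N" and w: "length w = g j" for i w
  proof -
    have "1 < length (w @ u)"
      using s_max[OF k0_P] k0 w u by (simp add: g_def d_def)
    then have "nc_mat_mult r C D i jj (w @ u) = 0"
      using nc_deg_le_coeff_eq_0[OF lin[OF i jj]] by blast
    moreover have "nc_mat_mult r C D i jj (w @ u) = (\<Sum>k | k \<in> P \<and> g k + d k = length w + length u.
        C i k (take (g k) w) * D k jj (drop (g k) w @ u))"
    proof (rule nc_mat_mult_top_coeff_append[OF P_r])
      show "nc_deg_le (C i k) (g k)" "nc_deg_le (D k jj) (d k)" if "k \<in> P" for k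
        using nc_deg_le_col_size[OF C _ i] nc_deg_le_row_size[OF D _ jj] that
        by (simp_all add: P_def g_def d_def)
      show "nc_mult (C i k) (D k jj) = 0" if "k < r" "k \<notin> P" for k
        using that nc_col_size_0[OF C _ i] nc_row_size_0[OF D _ jj]
        by (auto simp: P_def nc_mult_zero_left nc_mult_zero_right)
    qed (use s_max g_max w u in auto)
    ultimately show ?thesis
      using w u by (simp add: T_def)
  qed
  define a where "a k v = D k jj (v @ u)" for k v
  define e where "e = (\<lambda>k. if k \<in> T - {j} then (\<lambda>v. if length v + g k = g j
    then nc_smult (- 1 / a j []) (a k) v else 0) else 0)"
  have e: "e j = 0" "e k \<in> nc_poly_set n" for k
    using D jj by (auto simp: e_def T_def P_def nc_mat_set_def a_def[abs_def]
        intro!: nc_poly_set_restrict nc_poly_set_smult nc_poly_set_right_quotient nc_poly_set_zero)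
  have cancel: "C i j w = (\<Sum>k<r. nc_mult (C i k) (e k)) w" if i: "i < N" and "g j \<le> length w" for i w
  proof (rule nc_leading_column_cancel[OF _ _ _ _ _ _ e_def])
    show "nc_deg_le (C i k) (g k)" if "k \<in> T" for k
      using nc_deg_le_col_size[OF C _ i] that by (simp add: T_def P_def g_def)
    show "(\<Sum>k\<in>T. C i k (take (g k) w) * a k (drop (g k) w)) = 0" if "length w = g j" for w
      unfolding a_def by (rule top_rel[OF i that])
  qed (use P_r \<open>j \<in> P\<close> g_max u that in \<open>auto simp: T_def a_def\<close>)
  have "g j < nc_col_size N C j"
    using j(2) by (simp add: g_def)
  then show ?thesis
    using nc_column_op_reduces_measure[OF C D j(1) e cancel] that by blast
qed

lemma nc_drop_const_factor:
  assumes "C \<in> nc_mat_set n N r" "D \<in> nc_mat_set n r N"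
    and "\<And>i x. i < N \<Longrightarrow> x < N \<Longrightarrow> nc_deg_le (nc_mat_mult r C D i x) 1"
  shows "\<exists>U V. U \<in> nc_mat_set n N r \<and> V \<in> nc_mat_set n r N \<and>
    (\<forall>i<N. \<forall>x<N. nc_drop_const (nc_mat_mult r C D i x) = nc_mat_mult r U V i x)"
  using assms
proof (induction "nc_col_measure N r C" arbitrary: C D rule: less_induct)
  case less
  show ?case
  proof (cases "\<forall>k<r. nc_col_size N C k \<le> 1 \<or> nc_row_size N D k \<le> 1")
    case True
    then show ?thesis
      by (intro nc_drop_const_factor_of_const_cols[OF less.prems(1,2)]) blast
  next
    case False
    then obtain k0 where "k0 < r" "2 \<le> nc_col_size N C k0" "2 \<le> nc_row_size N D k0"
      by auto
    then obtain C' D' where "C' \<in> nc_mat_set n N r" "D' \<in> nc_mat_set n r N"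
      and same: "\<And>i x. i < N \<Longrightarrow> x < N \<Longrightarrow> nc_mat_mult r C' D' i x = nc_mat_mult r C D i x"
      and "nc_col_measure N r C' < nc_col_measure N r C"
      using nc_col_measure_reduction[OF less.prems] by blast
    then show ?thesis
      using less.hyps[of C' D'] less.prems(3) by (simp add: same)
  qed
qed

section \<open>Inner rank and linear pencils\<close>

lemma nc_full_iff:
  assumes A: "A \<in> nc_mat_set n N N"
  shows "nc_full n N N A \<longleftrightarrow> \<not> (\<exists>r<N. \<exists>C D. C \<in> nc_mat_set n N r \<and> D \<in> nc_mat_set n r N \<and>
    (\<forall>i<N. \<forall>j<N. A i j = nc_mat_mult r C D i j))"
    (is "_ \<longleftrightarrow> \<not> (\<exists>r<N. ?factors r)")
proof -
  define I :: ncmat where "I = (\<lambda>l j. if l = j then nc_const 1 else 0)"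
  have "I \<in> nc_mat_set n N N"
    using nc_poly_set_const nc_poly_set_zero by (simp add: I_def nc_mat_set_def)
  moreover have "nc_mat_mult N A I i j = A i j" if "j < N" for i j
  proof -
    have "nc_mat_mult N A I i j = (\<Sum>l<N. if l = j then nc_mult (A i l) (nc_const 1) else 0)"
      unfolding nc_mat_mult_def I_def by (intro sum.cong) (auto simp: nc_mult_zero_right)
    then show ?thesis
      using that by (simp add: nc_mult_const_right)
  qed
  ultimately have "?factors N"
    using A by (intro exI[of _ A] exI[of _ I]) auto
  then have rank_le: "nc_inner_rank n N N A \<le> N" and rank_factors: "?factors (nc_inner_rank n N N A)"
    unfolding nc_inner_rank_def by (rule Least_le, rule LeastI)
  have "nc_inner_rank n N N A \<le> r" if "?factors r" for r
    unfolding nc_inner_rank_def using that by (rule Least_le)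
  then show ?thesis
    using rank_le rank_factors unfolding nc_full_def by (metis min.idem not_le order.not_eq_order_implies_strict)
qed

lemma nc_full_cong:
  "(\<And>i j. i < m \<Longrightarrow> j < k \<Longrightarrow> A i j = B i j) \<Longrightarrow> nc_full n m k A = nc_full n m k B"
  by (simp add: nc_full_def nc_inner_rank_def)

lemma det_eq_0_if_zero_col:
  fixes A :: "'a :: idom mat"
  assumes A: "A \<in> carrier_mat N N" and k: "k < N" and zero: "\<And>i. i < N \<Longrightarrow> A $$ (i, k) = 0"
  shows "det A = 0"
  unfolding det_0_iff_vec_prod_zero[OF A]
proof (intro exI conjI)
  show "A *\<^sub>v unit_vec N k = 0\<^sub>v N"
    using A k zero by (intro eq_vecI) auto
qed (use k in auto)

lemma det_eq_0_if_factors_through: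
  fixes A :: "'a :: idom mat"
  assumes A: "A \<in> carrier_mat N N" and r: "r < N"
    and fac: "\<And>i j. i < N \<Longrightarrow> j < N \<Longrightarrow> A $$ (i, j) = (\<Sum>k<r. c i k * d k j)"
  shows "det A = 0"
proof -
  define Cm where "Cm = mat N N (\<lambda>(i, k). if k < r then c i k else 0)"
  define Dm where "Dm = mat N N (\<lambda>(k, j). if k < r then d k j else 0)"
  have Cm: "Cm \<in> carrier_mat N N" and Dm: "Dm \<in> carrier_mat N N"
    by (simp_all add: Cm_def Dm_def)
  have "A = Cm * Dm"
  proof (rule eq_matI)
    fix i j assume "i < dim_row (Cm * Dm)" "j < dim_col (Cm * Dm)"
    then have i: "i < N" and j: "j < N"
      using Cm Dm by auto
    have "(Cm * Dm) $$ (i, j) = (\<Sum>k<N. if k < r then c i k * d k j else 0)"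
      using i j by (simp add: Cm_def Dm_def scalar_prod_def atLeast0LessThan if_distrib cong: if_cong)
    also have "\<dots> = (\<Sum>k<r. c i k * d k j)"
    proof -
      have "{..<N} \<inter> {k. k < r} = {..<r}"
        using r by auto
      then show ?thesis
        by (simp add: sum.If_cases)
    qed
    finally show "A $$ (i, j) = (Cm * Dm) $$ (i, j)"
      using fac[OF i j] by simp
  qed (use A Cm Dm in auto)
  moreover have "det Cm = 0"
    using r by (intro det_eq_0_if_zero_col[OF Cm, of "N - 1"]) (auto simp: Cm_def)
  ultimately show ?thesis
    using det_mult[OF Cm Dm] by simp
qed

lemma nc_pencil_apply:
  "nc_pencil n a b i j w = nc_const (a $$ (i, j)) w + (\<Sum>l<n. b l $$ (i, j) * nc_var l w)"
  by (simp add: nc_pencil_def sum_fun_apply nc_smult_def)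

lemma nc_hom_part_apply: "nc_hom_part n b i j w = (\<Sum>l<n. b l $$ (i, j) * nc_var l w)"
  by (simp add: nc_hom_part_def sum_fun_apply nc_smult_def)

lemma nc_pencil_in_mat_set: "nc_pencil n a b \<in> nc_mat_set n N N"
  unfolding nc_mat_set_def nc_pencil_def
  by (auto intro!: nc_poly_set_add nc_poly_set_sum nc_poly_set_smult nc_poly_set_var nc_poly_set_const)

lemma nc_hom_part_in_mat_set: "nc_hom_part n b \<in> nc_mat_set n N N"
  unfolding nc_mat_set_def nc_hom_part_def
  by (auto intro!: nc_poly_set_sum nc_poly_set_smult nc_poly_set_var)

lemma nc_deg_le_pencil: "nc_deg_le (nc_pencil n a b i j) 1"
proof -
  have "nc_pencil n a b i j w = 0" if "1 < length w" for w
  proof -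
    have "w \<noteq> []" "\<And>l. w \<noteq> [l]"
      using that by auto
    then show ?thesis
      by (simp add: nc_pencil_apply nc_const_def nc_var_def)
  qed
  then show ?thesis
    unfolding nc_deg_le_def using not_le by blast
qed

lemma nc_pencil_Nil: "nc_pencil n a b i j [] = a $$ (i, j)"
  by (simp add: nc_pencil_apply nc_const_def nc_var_def)

lemma nc_drop_const_pencil: "nc_drop_const (nc_pencil n a b i j) = nc_hom_part n b i j"
  by (simp add: nc_drop_const_def nc_pencil_apply nc_hom_part_apply nc_const_def nc_var_def fun_eq_iff)

lemma det_eq_0_if_pencil_not_full:
  assumes "a \<in> carrier_mat N N" and "\<not> nc_full n N N (nc_pencil n a b)"
  shows "det a = 0"
proof -
  obtain r C D where "r < N" and fac: "\<forall>i<N. \<forall>j<N. nc_pencil n a b i j = nc_mat_mult r C D i j"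
    using assms(2) nc_full_iff[OF nc_pencil_in_mat_set] by blast
  then have "a $$ (i, j) = (\<Sum>k<r. C i k [] * D k j [])" if "i < N" "j < N" for i j
    using that by (metis nc_pencil_Nil nc_mat_mult_Nil)
  then show ?thesis
    by (rule det_eq_0_if_factors_through[OF assms(1) \<open>r < N\<close>])
qed

lemma hom_part_not_full_if_pencil_not_full:
  assumes "\<not> nc_full n N N (nc_pencil n a b)"
  shows "\<not> nc_full n N N (nc_hom_part n b)"
proof -
  obtain r C D where "r < N" "C \<in> nc_mat_set n N r" "D \<in> nc_mat_set n r N"
    and fac: "\<forall>i<N. \<forall>j<N. nc_pencil n a b i j = nc_mat_mult r C D i j"
    using assms nc_full_iff[OF nc_pencil_in_mat_set] by blast
  moreover have "nc_deg_le (nc_mat_mult r C D i j) 1" if "i < N" "j < N" for i j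
    using fac that nc_deg_le_pencil by metis
  ultimately obtain U V where "U \<in> nc_mat_set n N r" "V \<in> nc_mat_set n r N"
    and drop: "\<forall>i<N. \<forall>j<N. nc_drop_const (nc_mat_mult r C D i j) = nc_mat_mult r U V i j"
    using nc_drop_const_factor by blast
  have "\<forall>i<N. \<forall>j<N. nc_hom_part n b i j = nc_mat_mult r U V i j"
    using fac drop by (metis nc_drop_const_pencil)
  then show ?thesis
    using nc_full_iff[OF nc_hom_part_in_mat_set] \<open>r < N\<close> \<open>U \<in> _\<close> \<open>V \<in> _\<close> by blast
qed

lemma nc_full_spectrum_pencil_iff:
  assumes "b0 \<in> carrier_mat N N"
  shows "z \<in> nc_full_spectrum n N (nc_pencil n b0 b) \<longleftrightarrow>
    \<not> nc_full n N N (nc_pencil n (char_matrix b0 z) b)"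
proof -
  have "nc_pencil n b0 b i j - (if i = j then nc_const z else 0) = nc_pencil n (char_matrix b0 z) b i j"
    if "i < N" "j < N" for i j
    using assms that by (simp add: fun_eq_iff nc_pencil_apply nc_const_def char_matrix_def)
  then have "nc_full n N N (\<lambda>i j. nc_pencil n b0 b i j - (if i = j then nc_const z else 0)) =
      nc_full n N N (nc_pencil n (char_matrix b0 z) b)"
    by (rule nc_full_cong)
  then show ?thesis
    unfolding nc_full_spectrum_def by simp
qed

theorem lemma4p4:
  fixes n N :: nat and b0 :: "complex mat" and b :: "nat \<Rightarrow> complex mat"
  assumes "b0 \<in> carrier_mat N N"
    and "\<And>l. l < n \<Longrightarrow> b l \<in> carrier_mat N N"
  shows "nc_full_spectrum n N (nc_pencil n b0 b) \<subseteq> {z. eigenvalue b0 z}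
    \<and> (nc_full n N N (nc_hom_part n b) \<longrightarrow> nc_full_spectrum n N (nc_pencil n b0 b) = {})"
proof (intro conjI impI subsetI)
  fix z assume "z \<in> nc_full_spectrum n N (nc_pencil n b0 b)"
  then have "det (char_matrix b0 z) = 0"
    using assms(1) by (intro det_eq_0_if_pencil_not_full) (auto simp: nc_full_spectrum_pencil_iff)
  then show "z \<in> {z. eigenvalue b0 z}"
    using eigenvalue_det[OF assms(1)] by simp
next
  assume "nc_full n N N (nc_hom_part n b)"
  then show "nc_full_spectrum n N (nc_pencil n b0 b) = {}"
    using hom_part_not_full_if_pencil_not_full nc_full_spectrum_pencil_iff[OF assms(1)] by blast
qed

end
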